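(* Let $a,b,c,p\in\mathbb{C}$ with $-c\notin\mathbb{N}\cup\{0\}$ and $c\neq2$. Suppose that $\sinh(pz)F(a,b;c;z)=\sum_{n=0}^\infty u_nz^n$ for $|z|<1$. Then $u_0=0$, $u_1=p$, $u_2=\frac{abp}{c}$, $u_3=\frac{(a)_2(b)_2p}{2(c)_2}+\frac{p^3}{6}$, $u_4=\frac{abp^3}{6c}+\frac{(a)_3(b)_3p}{6(c)_3}$, $u_5=\frac{(a)_2(b)_2p^3}{12(c)_2}+\frac{(a)_4(b)_4p}{24(c)_4}+\frac{p^5}{120}$, $u_6=\frac{abp^5}{120c}+\frac{(a)_3(b)_3p^3}{36(c)_3}+\frac{(a)_5(b)_5p}{120(c)_5}$, $u_7=\frac{(a)_2(b)_2p^5}{240(c)_2}+\frac{(a)_4(b)_4p^3}{144(c)_4}+\frac{(a)_6(b)_6p}{720(c)_6}+\frac{p^7}{5040}$, $u_8=\frac{abp^7}{5040c}+\frac{(a)_3(b)_3p^5}{720(c)_3}+\frac{(a)_5(b)_5p^3}{720(c)_5}+\frac{(a)_7(b)_7p}{5040(c)_7}$, $u_9=\frac{(a)_2(b)_2p^7}{10080(c)_2}+\frac{(a)_4(b)_4p^5}{2880(c)_4}+\frac{(a)_6(b)_6p^3}{4320(c)_6}+\frac{(a)_8(b)_8p}{40320(c)_8}+\frac{p^9}{362880}$, and for all integers $n\ge9$, \[ u_{n+1}=\sum_{i=0}^9\delta_i(n)u_{n-i}, \] where $D(n)=(c-2)c\,n(n+1)(c+n-1)(c+n)$ and \[ \delta_0(n)=\frac{2(n-1)^2\left(a(c-2b)+c(b+c-3)\right)+4(c-2)(n-1)\left(c(a+b)-ab\right)+2ab(c-2)(c+1)}{(c-2)c(n+1)(c+n)},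 \] \[ \begin{aligned} \delta_1(n)=\frac{1}{D(n)}\Big[&-(n-4)(n-3)(n-2)(n-1)\left(a^2+4c(a+b)-10ab+b^2+c^2-6c-4p^2-1\right)\\ &+2(n-3)(n-2)(n-1)\Big(a^2(4b-3c)+a\left(2(b-1)c+4b(b+3)-3c^2\right)-c\left(b(3b+3c+2)+c-4p^2-13\right)\Big)\\ &+(n-2)(n-1)\Big(a^2\left(8b^2+b(4c+6)-6c^2+c\right)+a\left(-(10b+7)c^2+4(b(b+3)+3)c+6b(b+1)\right)\\ &\qquad+c\left(b^2(1-6c)+b(12-7c)+6(c-2)p^2+c+11\right)\Big)\\ &+(c-2)\left(a^2b(c-b(c+2))+ab(b+1)c+c^2(c+1)p^2\right)\\ &+2(n-1)\left(a^2b(b(4c-2)-3(c-1)c)-abc(3b(c-1)+c-5)+(c-2)c(c+1)p^2\right)\Big], \end{aligned} \] \[ \begin{aligned} \delta_2(n)=\frac{2}{D(n)}\Big[&(n-5)(n-4)(n-3)(n-2)\left(a^2+a(c-4b)+(b-1)(b+c+1)-8p^2\right)\\ &+(n-4)(n-3)(n-2)\Big(a^3+a^2(-5b+3c+2)-a\left(b(5b-2c+14)-3c+4p^2+1\right)+(b+3c+1)\left(b^2+b-4p^2-2\right)\Big)\\ &-(n-3)(n-2)\Big(a^3(b-2c)+a^2(b(10b+9)-4(b+1)c)+a\left(b(b+1)(b-4c+8)+6cp^2+2c\right)\\ &\qquad+2c\left(-b^3-2b^2+3p^2(b+c-3)+b+2\right)\Big)\\ &-(n-2)\Big(a^3b(4b-3c+2)+a^2b(2b+1)(2b-c)-a\left(p^2(10b-3c^2+c)+(b-1)b(b(3c-2)+4c-2)\right)\\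 &\qquad+cp^2\left(b(3c-1)+c^2-9\right)\Big)\\ &-(c+1)p^2\left(c^2(2a+2b+1)-3(a+1)(b+1)c+4ab\right)\\ &-(a-1)a(b-1)b\left(-c(a+b+1)+2ab+a+b+1\right)\Big], \end{aligned} \] \[ \begin{aligned} \delta_3(n)=-\frac{1}{D(n)}\Big[&(n-6)(n-5)(n-4)(n-3)\left((a-b)^2-24p^2-1\right)\\ &+2(n-5)(n-4)(n-3)\Big(a^3-a^2(b-2)-a\left(b(b+4)+12p^2+1\right)+b^3+2b^2-12p^2(b+c+1)-b-2\Big)\\ &+(n-4)(n-3)\Big(a^4+a^3(2b+3)-a^2\left(6b^2+3b+6p^2-1\right)+a\left(-12p^2(b+2c)+b(b(2b-3)-8)-3\right)\\ &\qquad-6p^2\left(b^2+4bc+(c-6)c-1\right)+(b+1)^2\left(b^2+b-2\right)+8p^4\Big)\\ &+2(n-3)\Big(-p^2\left(c^2(3a+3b+1)+c(a+b)(3a+3b+2)-40ab-13c\right)+ab(a-b-1)(a-b+1)(a+b)+4cp^4\Big)\\ &+a^4(b-1)b+a^3b(-2b^2+b+1)+a^2\left(b^4+b^3+p^2\left(-12b^2+2b(6c+5)-6c^2+c\right)-3b^2+b\right)\\ &+ap^2\left(-(6b+7)c^2+4(b(3b+2)+3)c+2b(5b-11)\right)\\ &-a(b-1)^2b(b+1)+cp^2\left(b^2(1-6c)+b(12-7c)+5(c-2)p^2+c+11\right)\Big], \end{aligned} \] \[ \begin{aligned} \delta_4(n)=\frac{2p^2}{D(n)}\Big[&-8(n-7)(n-6)(n-5)(n-4)-4(n-6)(n-5)(n-4)\left(3(a+b+1)+c\right)\\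 &+2(n-5)(n-4)\left(8p^2-3(a+b-1)(a+b+c+1)\right)\\ &+(n-4)\Big(-a^3-a^2(3b+3c+2)+a\left(b(-3b-6c+46)-3c+4p^2+1\right)-(b+3c+1)\left(b^2+b-4p^2-2\right)\Big)\\ &+a^3(3b-2c)+a^2(3(5-2b)b-4c)+a\left(p^2(5c-6b)-4bc+3b(b(b+5)-4)+2c\right)\\ &+5cp^2(b+c-3)-2(b-1)(b+1)(b+2)c\Big], \end{aligned} \] \[ \begin{aligned} \delta_5(n)=\frac{p^2}{D(n)}\Big[&4(n-8)(n-7)(n-6)(n-5)+8(n-7)(n-6)(n-5)(a+b+1)\\ &+6(n-6)(n-5)\left((a+b)^2-8p^2-1\right)\\ &-2(n-5)\left(-a^3-3a^2b-2a^2-3ab^2+12p^2(a+b+c+1)+16ab+a-b^3-2b^2+b+2\right)\\ &+a^4+a^3(3-2b)+a^2\left(b(6b-11)-5p^2+1\right)-a\left(2b^3+11b^2-2b(13p^2+6)+20cp^2+3\right)\\ &-5p^2\left(b^2+4bc+(c-6)c-1\right)+(b+1)^2\left(b^2+b-2\right)+4p^4\Big], \end{aligned} \] \[ \delta_6(n)=\frac{2p^4\left(5a^2+a(-8b+5c+12n-72)+5b^2+5bc+12b(n-6)+4n(c+4n)-29c-196n-8p^2+595\right)}{D(n)}, \] \[ \delta_7(n)=\frac{p^4\left(-5a^2+2a(b-4n+28)-5b^2-8b(n-7)-8(n-14)n+24p^2-387\right)}{D(n)}, \] \[ \delta_8(n)=-\frac{16p^6}{D(n)},\qquad \delta_9(n)=\frac{4p^6}{D(n)}.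 \]
   Context: For $a\in\mathbb{C}$, $(a)_n=a(a+1)\cdots(a+n-1)$ denotes the Pochhammer symbol, with $(a)_0=1$. For $a,b,c\in\mathbb{C}$ with $-c\notin\mathbb{N}\cup\{0\}$, the Gaussian hypergeometric function is $F(a,b;c;z)=\sum_{n=0}^\infty \frac{(a)_n(b)_n}{(c)_n\,n!}z^n$, $|z|<1$. *)

theory Defs
  imports "HOL-Analysis.Analysis"
begin

definition hyp2F1 :: "complex \<Rightarrow> complex \<Rightarrow> complex \<Rightarrow> complex \<Rightarrow> complex" where
  "hyp2F1 a b c z =
     (\<Sum>n. pochhammer a n * pochhammer b n / (pochhammer c n * fact n) * z ^ n)"

definition Dfun :: "complex \<Rightarrow> complex \<Rightarrow> complex" where
  "Dfun c n = (c-2)*c*n*(n+1)*(c+n-1)*(c+n)"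

definition delta0 :: "complex \<Rightarrow> complex \<Rightarrow> complex \<Rightarrow> complex \<Rightarrow> complex \<Rightarrow> complex" where
  "delta0 a b c p n =
    (2*(n-1)^2*(a*(c-2*b)+c*(b+c-3)) + 4*(c-2)*(n-1)*(c*(a+b)-a*b) + 2*a*b*(c-2)*(c+1))
    / ((c-2)*c*(n+1)*(c+n))"

definition delta1 :: "complex \<Rightarrow> complex \<Rightarrow> complex \<Rightarrow> complex \<Rightarrow> complex \<Rightarrow> complex" where
  "delta1 a b c p n = (1 / Dfun c n) * (
     - ((n-4)*(n-3)*(n-2)*(n-1)*(a^2+4*c*(a+b)-10*a*b+b^2+c^2-6*c-4*p^2-1))
     + 2*(n-3)*(n-2)*(n-1)*(a^2*(4*b-3*c) + a*(2*(b-1)*c+4*b*(b+3)-3*c^2)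
         - c*(b*(3*b+3*c+2)+c-4*p^2-13))
     + (n-2)*(n-1)*(a^2*(8*b^2+b*(4*c+6)-6*c^2+c)
         + a*(- ((10*b+7)*c^2)+4*(b*(b+3)+3)*c+6*b*(b+1))
         + c*(b^2*(1-6*c)+b*(12-7*c)+6*(c-2)*p^2+c+11))
     + (c-2)*(a^2*b*(c-b*(c+2))+a*b*(b+1)*c+c^2*(c+1)*p^2)
     + 2*(n-1)*(a^2*b*(b*(4*c-2)-3*(c-1)*c) - a*b*c*(3*b*(c-1)+c-5) + (c-2)*c*(c+1)*p^2))"

definition delta2 :: "complex \<Rightarrow> complex \<Rightarrow> complex \<Rightarrow> complex \<Rightarrow> complex \<Rightarrow> complex" where
  "delta2 a b c p n = (2 / Dfun c n) * (
       (n-5)*(n-4)*(n-3)*(n-2)*(a^2+a*(c-4*b)+(b-1)*(b+c+1)-8*p^2)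
     + (n-4)*(n-3)*(n-2)*(a^3+a^2*(-5*b+3*c+2) - a*(b*(5*b-2*c+14)-3*c+4*p^2+1)
         + (b+3*c+1)*(b^2+b-4*p^2-2))
     - (n-3)*(n-2)*(a^3*(b-2*c) + a^2*(b*(10*b+9)-4*(b+1)*c)
         + a*(b*(b+1)*(b-4*c+8)+6*c*p^2+2*c)
         + 2*c*(- (b^3)-2*b^2+3*p^2*(b+c-3)+b+2))
     - (n-2)*(a^3*b*(4*b-3*c+2) + a^2*b*(2*b+1)*(2*b-c)
         - a*(p^2*(10*b-3*c^2+c)+(b-1)*b*(b*(3*c-2)+4*c-2))
         + c*p^2*(b*(3*c-1)+c^2-9))
     - (c+1)*p^2*(c^2*(2*a+2*b+1)-3*(a+1)*(b+1)*c+4*a*b)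
     - (a-1)*a*(b-1)*b*(- (c*(a+b+1))+2*a*b+a+b+1))"

definition delta3 :: "complex \<Rightarrow> complex \<Rightarrow> complex \<Rightarrow> complex \<Rightarrow> complex \<Rightarrow> complex" where
  "delta3 a b c p n = - ((1 / Dfun c n) * (
       (n-6)*(n-5)*(n-4)*(n-3)*((a-b)^2-24*p^2-1)
     + 2*(n-5)*(n-4)*(n-3)*(a^3 - a^2*(b-2) - a*(b*(b+4)+12*p^2+1) + b^3 + 2*b^2
         - 12*p^2*(b+c+1) - b - 2)
     + (n-4)*(n-3)*(a^4 + a^3*(2*b+3) - a^2*(6*b^2+3*b+6*p^2-1)
         + a*(-12*p^2*(b+2*c)+b*(b*(2*b-3)-8)-3)
         - 6*p^2*(b^2+4*b*c+(c-6)*c-1) + (b+1)^2*(b^2+b-2) + 8*p^4)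
     + 2*(n-3)*(- (p^2*(c^2*(3*a+3*b+1)+c*(a+b)*(3*a+3*b+2)-40*a*b-13*c))
         + a*b*(a-b-1)*(a-b+1)*(a+b) + 4*c*p^4)
     + a^4*(b-1)*b + a^3*b*(-2*b^2+b+1)
     + a^2*(b^4+b^3+p^2*(-12*b^2+2*b*(6*c+5)-6*c^2+c)-3*b^2+b)
     + a*p^2*(- ((6*b+7)*c^2)+4*(b*(3*b+2)+3)*c+2*b*(5*b-11))
     - a*(b-1)^2*b*(b+1)
     + c*p^2*(b^2*(1-6*c)+b*(12-7*c)+5*(c-2)*p^2+c+11)))"

definition delta4 :: "complex \<Rightarrow> complex \<Rightarrow> complex \<Rightarrow> complex \<Rightarrow> complex \<Rightarrow> complex" where
  "delta4 a b c p n = (2*p^2 / Dfun c n) * (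
       -8*(n-7)*(n-6)*(n-5)*(n-4) - 4*(n-6)*(n-5)*(n-4)*(3*(a+b+1)+c)
     + 2*(n-5)*(n-4)*(8*p^2-3*(a+b-1)*(a+b+c+1))
     + (n-4)*(- (a^3) - a^2*(3*b+3*c+2) + a*(b*(-3*b-6*c+46)-3*c+4*p^2+1)
         - (b+3*c+1)*(b^2+b-4*p^2-2))
     + a^3*(3*b-2*c) + a^2*(3*(5-2*b)*b-4*c)
     + a*(p^2*(5*c-6*b)-4*b*c+3*b*(b*(b+5)-4)+2*c)
     + 5*c*p^2*(b+c-3) - 2*(b-1)*(b+1)*(b+2)*c)"

definition delta5 :: "complex \<Rightarrow> complex \<Rightarrow> complex \<Rightarrow> complex \<Rightarrow> complex \<Rightarrow> complex" where
  "delta5 a b c p n = (p^2 / Dfun c n) * (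
       4*(n-8)*(n-7)*(n-6)*(n-5) + 8*(n-7)*(n-6)*(n-5)*(a+b+1)
     + 6*(n-6)*(n-5)*((a+b)^2-8*p^2-1)
     - 2*(n-5)*(- (a^3) - 3*a^2*b - 2*a^2 - 3*a*b^2 + 12*p^2*(a+b+c+1) + 16*a*b + a
         - b^3 - 2*b^2 + b + 2)
     + a^4 + a^3*(3-2*b) + a^2*(b*(6*b-11)-5*p^2+1)
     - a*(2*b^3+11*b^2-2*b*(13*p^2+6)+20*c*p^2+3)
     - 5*p^2*(b^2+4*b*c+(c-6)*c-1) + (b+1)^2*(b^2+b-2) + 4*p^4)"

definition delta6 :: "complex \<Rightarrow> complex \<Rightarrow> complex \<Rightarrow> complex \<Rightarrow> complex \<Rightarrow> complex" where
  "delta6 a b c p n =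
     2*p^4*(5*a^2 + a*(-8*b+5*c+12*n-72) + 5*b^2 + 5*b*c + 12*b*(n-6) + 4*n*(c+4*n)
            - 29*c - 196*n - 8*p^2 + 595) / Dfun c n"

definition delta7 :: "complex \<Rightarrow> complex \<Rightarrow> complex \<Rightarrow> complex \<Rightarrow> complex \<Rightarrow> complex" where
  "delta7 a b c p n =
     p^4*(-5*a^2 + 2*a*(b-4*n+28) - 5*b^2 - 8*b*(n-7) - 8*(n-14)*n + 24*p^2 - 387) / Dfun c n"

definition delta8 :: "complex \<Rightarrow> complex \<Rightarrow> complex \<Rightarrow> complex \<Rightarrow> complex \<Rightarrow> complex" where
  "delta8 a b c p n = - (16*p^6 / Dfun c n)"

definition delta9 :: "complex \<Rightarrow> complex \<Rightarrow> complex \<Rightarrow> complex \<Rightarrow> complex \<Rightarrow> complex" where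
  "delta9 a b c p n = 4*p^6 / Dfun c n"

definition delta :: "complex \<Rightarrow> complex \<Rightarrow> complex \<Rightarrow> complex \<Rightarrow> nat \<Rightarrow> complex \<Rightarrow> complex" where
  "delta a b c p i n =
     [delta0 a b c p n, delta1 a b c p n, delta2 a b c p n, delta3 a b c p n,
      delta4 a b c p n, delta5 a b c p n, delta6 a b c p n, delta7 a b c p n,
      delta8 a b c p n, delta9 a b c p n] ! i"

end

theory Submission
  imports Defs
begin

(* Write sinh(pz) F(a,b;c;z) = (e^{pz} F - e^{-pz} F) / 2.  Conjugating the hypergeometric
   equation by e^{qz} replaces d/dz by d/dz - q, so the coefficients of e^{qz} F satisfy a
   four-term recurrence whose coefficients involve odd powers of q.  A polynomial combination
   of eight consecutive shifts of it eliminates these odd powers and gives the ten-term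
   recurrence with the coefficients delta_i(n), which depend on p only through p^2.  It
   therefore holds for q = p and for q = -p, hence for the coefficients u_n of
   sinh(pz) F(z), which are identified by uniqueness of power series expansions; the initial
   values are read off the Cauchy product of the two series. *)

unbundle no vec_syntax
unbundle fps_syntax

lemma LIMSEQ_of_nat_add_divide_of_nat_add:
  "(\<lambda>n. (of_nat n + a) / (of_nat n + b)) \<longlonglongrightarrow> (1 :: 'a :: real_normed_field)"
proof (rule Lim_transform_eventually)
  have "(\<lambda>n. (1 + a * (1 / of_nat n)) / (1 + b * (1 / of_nat n))) \<longlonglongrightarrow> (1 + a * 0) / (1 + b * 0)"
    by (intro tendsto_intros lim_1_over_n) simp
  then show "(\<lambda>n. (1 + a * (1 / of_nat n)) / (1 + b * (1 / of_nat n))) \<longlonglongrightarrow> 1"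
    by simp
  show "eventually (\<lambda>n. (1 + a * (1 / of_nat n)) / (1 + b * (1 / of_nat n))
                        = (of_nat n + a) / (of_nat n + b)) sequentially"
    using eventually_gt_at_top[of 0]
  proof eventually_elim
    case (elim n)
    then have "(1 + a * (1 / of_nat n)) / (1 + b * (1 / of_nat n))
                 = ((of_nat n + a) / of_nat n) / ((of_nat n + b) / of_nat n)"
      by (simp add: field_simps)
    also have "\<dots> = (of_nat n + a) / (of_nat n + b)" using elim by simp
    finally show ?case .
  qed
qed

lemma conv_radius_ge_1_by_ratio:
  fixes f :: "nat \<Rightarrow> 'a :: {banach, real_normed_div_algebra}"
  assumes ratio: "eventually (\<lambda>n. norm (f (Suc n)) \<le> \<rho> n * norm (f n)) sequentially"
    and lim: "\<rho> \<longlonglongrightarrow> 1"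
  shows "conv_radius f \<ge> 1"
proof (rule conv_radius_geI_ex')
  fix r :: real
  assume "0 < r" "ereal r < 1"
  then have r: "0 < r" "r < 1" by simp_all
  define \<kappa> where "\<kappa> = (1 + r) / 2"
  have "(\<lambda>n. \<rho> n * r) \<longlonglongrightarrow> 1 * r" by (intro tendsto_intros lim)
  moreover have "1 * r < \<kappa>" using r by (simp add: \<kappa>_def)
  ultimately have "eventually (\<lambda>n. \<rho> n * r < \<kappa>) sequentially" by (rule order_tendstoD)
  from eventually_conj[OF ratio this] obtain N
    where N: "\<And>n. n \<ge> N \<Longrightarrow> norm (f (Suc n)) \<le> \<rho> n * norm (f n) \<and> \<rho> n * r < \<kappa>"
    by (auto simp: eventually_sequentially)
  show "summable (\<lambda>n. f n * of_real r ^ n)"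
  proof (rule summable_ratio_test)
    show "\<kappa> < 1" using r by (simp add: \<kappa>_def)
    fix n assume "n \<ge> N"
    then have "norm (f (Suc n)) * r \<le> \<rho> n * norm (f n) * r"
      using N r by (intro mult_right_mono) auto
    also have "\<dots> = (\<rho> n * r) * norm (f n)" by (simp add: mult_ac)
    also have "\<dots> \<le> \<kappa> * norm (f n)"
      using N[OF \<open>n \<ge> N\<close>] by (intro mult_right_mono) auto
    finally have "norm (f (Suc n)) * r * r ^ n \<le> \<kappa> * norm (f n) * r ^ n"
      using r by (intro mult_right_mono) auto
    then show "norm (f (Suc n) * of_real r ^ Suc n) \<le> \<kappa> * norm (f n * of_real r ^ n)"
      using r by (simp add: norm_mult norm_power mult_ac)
  qed
qed

lemma of_nat_add_neq_0:
  fixes c :: "'a :: ring_1"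
  assumes "\<forall>k::nat. c \<noteq> - of_nat k"
  shows "of_nat n + c \<noteq> 0"
  using assms by (simp add: add_eq_0_iff)

definition hyp_coeff :: "'a \<Rightarrow> 'a \<Rightarrow> 'a \<Rightarrow> nat \<Rightarrow> 'a :: field_char_0" where
  "hyp_coeff a b c n = pochhammer a n * pochhammer b n / (pochhammer c n * fact n)"

definition hyp_fps :: "'a \<Rightarrow> 'a \<Rightarrow> 'a \<Rightarrow> 'a :: field_char_0 fps" where
  "hyp_fps a b c = Abs_fps (hyp_coeff a b c)"

lemma hyp_coeff_Suc:
  "hyp_coeff a b c (Suc n) =
     (of_nat n + a) * (of_nat n + b) / ((of_nat n + 1) * (of_nat n + c)) * hyp_coeff a b c n"
  by (simp add: hyp_coeff_def pochhammer_rec' times_divide_times_eq ac_simps)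

lemma fps_conv_radius_hyp_fps:
  fixes a b c :: "'a :: {real_normed_field, banach}"
  shows "fps_conv_radius (hyp_fps a b c) \<ge> 1"
proof -
  let ?\<rho> = "\<lambda>n. norm ((of_nat n + a) / (of_nat n + 1) * ((of_nat n + b) / (of_nat n + c)))"
  have "?\<rho> \<longlonglongrightarrow> norm ((1::'a) * 1)"
    by (intro tendsto_intros LIMSEQ_of_nat_add_divide_of_nat_add)
  moreover have "norm (hyp_coeff a b c (Suc n)) \<le> ?\<rho> n * norm (hyp_coeff a b c n)" for n
    by (simp add: hyp_coeff_Suc norm_mult norm_divide)
  ultimately show ?thesis
    unfolding fps_conv_radius_def hyp_fps_def
    by (intro conv_radius_ge_1_by_ratio[where \<rho> = ?\<rho>]) auto
qed

lemma eval_fps_hyp_fps: "eval_fps (hyp_fps a b c) z = hyp2F1 a b c z"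
  by (simp add: eval_fps_def hyp_fps_def hyp_coeff_def hyp2F1_def)

(* The derivation D is a parameter because conjugation by e^{qz} turns d/dz into d/dz - q. *)
definition hyp_operator ::
  "'a \<Rightarrow> 'a \<Rightarrow> 'a \<Rightarrow> ('a fps \<Rightarrow> 'a fps) \<Rightarrow> 'a fps \<Rightarrow> 'a :: field_char_0 fps" where
  "hyp_operator a b c D F =
     fps_X * (1 - fps_X) * D (D F) + (fps_const c - fps_const (a + b + 1) * fps_X) * D F
     - fps_const (a * b) * F"

lemma hyp_operator_hyp_fps:
  fixes a b c :: "'a :: field_char_0"
  assumes c: "\<forall>k::nat. c \<noteq> - of_nat k"
  shows "hyp_operator a b c fps_deriv (hyp_fps a b c) = 0"
proof (rule fps_ext)
  fix n
  have "(of_nat n + 1 :: 'a) \<noteq> 0" by (metis of_nat_Suc of_nat_neq_0 add.commute)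
  then have rec: "(of_nat n + 1) * (of_nat n + c) * hyp_coeff a b c (Suc n)
                    = (of_nat n + a) * (of_nat n + b) * hyp_coeff a b c n"
    using of_nat_add_neq_0[OF c, of n] by (simp add: hyp_coeff_Suc)
  show "hyp_operator a b c fps_deriv (hyp_fps a b c) $ n = 0 $ n"
  proof (cases n)
    case 0
    then show ?thesis using rec by (simp add: hyp_operator_def hyp_fps_def algebra_simps)
  next
    case (Suc m)
    then show ?thesis using rec
      by (cases m) (simp_all add: hyp_operator_def hyp_fps_def algebra_simps fps_X_mult_nth)
  qed
qed

lemma hyp_operator_exp_mult:
  "hyp_operator a b c (\<lambda>H. fps_deriv H - fps_const q * H) (fps_exp q * F)
     = fps_exp q * hyp_operator a b c fps_deriv F"
  by (simp add: hyp_operator_def algebra_simps)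

definition exp_hyp_residual ::
  "'a \<Rightarrow> 'a \<Rightarrow> 'a \<Rightarrow> 'a \<Rightarrow> (nat \<Rightarrow> 'a) \<Rightarrow> nat \<Rightarrow> 'a :: field_char_0" where
  "exp_hyp_residual a b c q g k =
     (of_nat k + 3) * (of_nat k + c + 2) * g (k + 3)
     - ((of_nat k + a + 2) * (of_nat k + b + 2) + q * (2 * of_nat k + c + 4)) * g (k + 2)
     + q * (q + 2 * of_nat k + a + b + 3) * g (k + 1) - q^2 * g k"

lemma exp_hyp_residual_conv_nth:
  "exp_hyp_residual a b c q (fps_nth G) k
     = hyp_operator a b c (\<lambda>H. fps_deriv H - fps_const q * H) G $ (k + 2)"
  by (simp add: exp_hyp_residual_def hyp_operator_def numeral_eq_Suc numeral_fps_const
      algebra_simps)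

lemma exp_hyp_residual_eq_0:
  assumes "\<forall>k::nat. c \<noteq> - of_nat k"
  shows "exp_hyp_residual a b c q (fps_nth (fps_exp q * hyp_fps a b c)) k = 0"
  by (simp only: exp_hyp_residual_conv_nth hyp_operator_exp_mult hyp_operator_hyp_fps[OF assms])
    simp

lemma sum_atMost_9:
  "(\<Sum>i\<le>(9::nat). f i)
     = f 0 + f 1 + f 2 + f 3 + f 4 + f 5 + f 6 + f 7 + f 8 + (f 9 :: 'a :: comm_monoid_add)"
  by (simp add: atMost_Suc numeral_eq_Suc add_ac)

lemma delta_nth:
  "delta a b c p 0 n = delta0 a b c p n" "delta a b c p 1 n = delta1 a b c p n"
  "delta a b c p 2 n = delta2 a b c p n" "delta a b c p 3 n = delta3 a b c p n"
  "delta a b c p 4 n = delta4 a b c p n" "delta a b c p 5 n = delta5 a b c p n"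
  "delta a b c p 6 n = delta6 a b c p n" "delta a b c p 7 n = delta7 a b c p n"
  "delta a b c p 8 n = delta8 a b c p n" "delta a b c p 9 n = delta9 a b c p n"
  by (simp_all add: delta_def)

lemma delta_recurrence:
  fixes g :: "nat \<Rightarrow> complex"
  assumes res: "\<And>k. exp_hyp_residual a b c q g k = 0"
    and D: "Dfun c (of_nat n) \<noteq> 0" and n: "9 \<le> n"
  shows "g (n + 1) = (\<Sum>i\<le>9. delta a b c q i (of_nat n) * g (n - i))"
proof -
  obtain m where m: "n = m + 9" using n by (metis add.commute le_iff_add)
  let ?x = "of_nat (m + 9) :: complex"
  let ?E = "(c - 2) * c * (?x + 1) * (c + ?x)"
  have E: "?E \<noteq> 0" using D m by (simp add: Dfun_def)
  have cancel:
    "Dfun c ?x * (k / Dfun c ?x * y) = k * y"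
    "Dfun c ?x * - (k / Dfun c ?x * y) = - (k * y)"
    "Dfun c ?x * (y / Dfun c ?x) = y"
    "Dfun c ?x * - (y / Dfun c ?x) = - y"
    "Dfun c ?x * (y / ?E) = ?x * (c + ?x - 1) * y" for k y
    using D E m by (simp_all add: Dfun_def)
  \<comment> \<open>The multipliers were computed by linear algebra over Q(a, b, c, q, n).\<close>
  have "Dfun c ?x * g (m + 10) - (\<Sum>i\<le>9. Dfun c ?x * delta a b c q i ?x * g (m + 9 - i)) =
        ((c - 2)*c*?x*(?x + c - 1)) * exp_hyp_residual a b c q g (m + 7)
      + ((4*a*b - 2*a*c - 2*b*c - c^2 + 4*c)*?x^2 + (4*a*b*c - 3*a*c^2 - 3*b*c^2 + 2*c^2*q
          - 16*a*b + 10*a*c + 10*b*c + 4*c^2 - 4*c*q - 12*c)*?x - a*b*c^2 + c^3*q - 4*a*b*c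
          + 4*a*c^2 + 4*b*c^2 - 2*c^2*q + 16*a*b - 10*a*c - 10*b*c - 2*c^2
          + 6*c) * exp_hyp_residual a b c q g (m + 6)
      + ((a^2 - 6*a*b + 2*a*c + b^2 + 2*b*c - 4*q^2 - 2*c - 1)*?x^2 + (3*a^2*c - 4*a*b^2
          + 2*a*b*c + 8*a*b*q - 4*a*c*q + 3*b^2*c - 4*b*c*q - 2*c^2*q - 4*c*q^2 - 7*a^2 + 34*a*b
          - 12*a*c - 7*b^2 - 12*b*c + 8*c*q + 28*q^2 + 9*c + 7 - 4*a^2*b)*?x - 4*a^2*b^2
          + 2*a^2*b*c + 2*a*b^2*c + 4*a*b*c*q - 3*a*c^2*q - 3*b*c^2*q + c^2*q^2 + 10*a^2*b
          - 8*a^2*c + 10*a*b^2 - 6*a*b*c - 16*a*b*q + 10*a*c*q - 8*b^2*c + 10*b*c*q + c^2*q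
          + 10*c*q^2 + 12*a^2 - 46*a*b + 16*a*c + 12*b^2 + 16*b*c - 6*c*q - 48*q^2 - 8*c
          - 12) * exp_hyp_residual a b c q g (m + 5)
      + ((2*a*b - b^2 + 12*q^2 + 1 - a^2)*?x^2 + (a^2*b + 2*a^2*q + a*b^2 - 12*a*b*q + 4*a*c*q
          + 4*a*q^2 - b^3 + 2*b^2*q + 4*b*c*q + 4*b*q^2 + 8*c*q^2 - 8*q^3 + 8*a^2 - 16*a*b
          + 8*b^2 - 4*c*q - 112*q^2 + a + b - 2*q - 8 - a^3)*?x - a^3*b + 2*a^2*b^2 - 4*a^2*b*q
          + 3*a^2*c*q - a*b^3 - 4*a*b^2*q + 2*a*b*c*q + 8*a*b*q^2 - 2*a*c*q^2 + 3*b^2*c*q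
          - 2*b*c*q^2 - c^2*q^2 - 4*c*q^3 + 4*a^3 - 4*a^2*b - 8*a^2*q - 4*a*b^2 + 28*a*b*q
          - 8*a*c*q - 16*a*q^2 + 4*b^3 - 8*b^2*q - 8*b*c*q - 16*b*q^2 - 32*c*q^2 + 32*q^3
          - 16*a^2 + 33*a*b - 16*b^2 + 5*c*q + 256*q^2 - 4*a - 4*b + 8*q
          + 16) * exp_hyp_residual a b c q g (m + 4)
      + (q*(- 12*q*?x^2 + (4*a*b - 8*a*q - 2*b^2 - 8*b*q - 4*c*q + 24*q^2 + 140*q + 2
          - 2*a^2)*?x - a^3 + a^2*b + a^2*q + a*b^2 - 14*a*b*q + 2*a*c*q + 4*a*q^2 - b^3 + b^2*q
          + 2*b*c*q + 4*b*q^2 + 8*c*q^2 - 4*q^3 + 7*a^2 - 14*a*b + 44*a*q + 7*b^2 + 44*b*q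
          + 22*c*q - 124*q^2 + a + b - 405*q - 7)) * exp_hyp_residual a b c q g (m + 3)
      + (q^2*(4*?x^2 + (4*a + 4*b - 24*q - 56)*?x - a^2 + 6*a*b - 8*a*q - b^2 - 8*b*q - 4*c*q
          + 12*q^2 - 28*a - 28*b + 152*q + 197)) * exp_hyp_residual a b c q g (m + 2)
      + (4*q^3*(2*?x + a + b - 3*q - 15)) * exp_hyp_residual a b c q g (m + 1)
      + (4*q^4) * exp_hyp_residual a b c q g m"
    unfolding sum_atMost_9 delta_nth
    by (simp only: delta0_def delta1_def delta2_def delta3_def delta4_def
        delta5_def delta6_def delta7_def delta8_def delta9_def cancel)
      (simp add: exp_hyp_residual_def Dfun_def numeral_eq_Suc, algebra)
  then have "Dfun c ?x * g (m + 10) = Dfun c ?x * (\<Sum>i\<le>9. delta a b c q i ?x * g (m + 9 - i))"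
    by (simp add: res sum_distrib_left mult.assoc)
  with D m show ?thesis by (simp add: add.commute)
qed

lemma Dfun_neq_0:
  assumes c: "\<forall>k::nat. c \<noteq> - of_nat k" and "c \<noteq> 2" and "n \<ge> 1"
  shows "Dfun c (of_nat n) \<noteq> 0"
proof -
  obtain m where m: "n = Suc m" using \<open>n \<ge> 1\<close> by (cases n) auto
  have "c \<noteq> 0" using c by (metis minus_zero of_nat_0)
  moreover have "c + of_nat n - 1 \<noteq> 0"
    using of_nat_add_neq_0[OF c, of m] by (simp add: m add_ac)
  moreover have "c + of_nat n \<noteq> 0" using of_nat_add_neq_0[OF c, of n] by (simp add: add_ac)
  moreover have "(of_nat n :: complex) \<noteq> 0" using \<open>n \<ge> 1\<close> by simp
  moreover have "(of_nat n + 1 :: complex) \<noteq> 0" by (metis of_nat_Suc of_nat_neq_0 add.commute)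
  ultimately show ?thesis using \<open>c \<noteq> 2\<close> unfolding Dfun_def by auto
qed

lemma delta_minus: "delta a b c (- p) i n = delta a b c p i n"
  by (simp add: delta_def delta0_def delta1_def delta2_def delta3_def delta4_def delta5_def
      delta6_def delta7_def delta8_def delta9_def)

definition fps_sinh :: "'a :: field_char_0 \<Rightarrow> 'a fps" where
  "fps_sinh c = Abs_fps (\<lambda>n. if even n then 0 else c ^ n / fact n)"

lemma fps_sinh_conv_exp: "fps_sinh c = fps_const (1 / 2) * (fps_exp c - fps_exp (- c))"
  by (rule fps_ext) (simp add: fps_sinh_def field_simps)

lemma fps_conv_radius_sinh [simp]:
  fixes c :: "'a :: {banach, real_normed_field}"
  shows "fps_conv_radius (fps_sinh c) = \<infinity>"
proof -
  have "fps_conv_radius (fps_exp c - fps_exp (- c)) \<ge> \<infinity>"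
    using fps_conv_radius_diff[of "fps_exp c" "fps_exp (- c)"] by simp
  then show ?thesis
    by (simp add: fps_sinh_conv_exp fps_conv_radius_cmult_left)
qed

lemma eval_fps_sinh:
  fixes c :: "'a :: {banach, real_normed_field}"
  shows "eval_fps (fps_sinh c) z = sinh (c * z)"
proof -
  have "fps_conv_radius (fps_exp c - fps_exp (- c)) = \<infinity>"
    using fps_conv_radius_diff[of "fps_exp c" "fps_exp (- c)"] by simp
  then have "eval_fps (fps_sinh c) z = 1 / 2 * eval_fps (fps_exp c - fps_exp (- c)) z"
    unfolding fps_sinh_conv_exp by (subst eval_fps_mult) simp_all
  also have "\<dots> = (exp (c * z) - exp (- (c * z))) / 2"
    by (simp add: eval_fps_diff)
  also have "\<dots> = sinh (c * z)"
    by (simp add: sinh_def scaleR_conv_of_real field_simps)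
  finally show ?thesis .
qed

lemma coeffs_of_sums_sinh_hyp2F1:
  fixes a b c p :: complex and u :: "nat \<Rightarrow> complex"
  assumes u: "\<forall>z::complex. norm z < 1 \<longrightarrow> (\<lambda>n. u n * z ^ n) sums (sinh (p * z) * hyp2F1 a b c z)"
  shows "u n = (fps_sinh p * hyp_fps a b c) $ n"
proof -
  let ?S = "fps_sinh p * hyp_fps a b c"
  have "fps_conv_radius (hyp_fps a b c) \<le> fps_conv_radius ?S"
    using fps_conv_radius_mult[of "fps_sinh p" "hyp_fps a b c"] by simp
  with fps_conv_radius_hyp_fps have radius: "fps_conv_radius ?S \<ge> 1"
    by (rule order_trans)
  have "fps_conv_radius (Abs_fps u) \<ge> norm (1 / 2 :: complex)"
    unfolding fps_conv_radius_def using u by (intro conv_radius_geI) (auto simp: sums_iff)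
  then have "fps_conv_radius (Abs_fps u) > 0"
    by (rule order.strict_trans2[rotated]) (simp add: zero_ereal_def)
  moreover have "fps_conv_radius ?S > 0"
    using radius by (rule order.strict_trans2[rotated]) simp
  moreover have "eventually (\<lambda>z. eval_fps (Abs_fps u) z = eval_fps ?S z) (nhds 0)"
  proof (rule eventually_nhds_in_open[of "ball 0 1", THEN eventually_mono])
    fix z :: complex assume "z \<in> ball 0 1"
    then have z: "norm z < 1" by simp
    then have "ereal (norm z) < 1" by simp
    then have "ereal (norm z) < fps_conv_radius (hyp_fps a b c)"
      using fps_conv_radius_hyp_fps by (rule less_le_trans)
    then have "eval_fps ?S z = sinh (p * z) * hyp2F1 a b c z"
      by (simp add: eval_fps_mult eval_fps_sinh eval_fps_hyp_fps)
    moreover have "eval_fps (Abs_fps u) z = sinh (p * z) * hyp2F1 a b c z"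
      using u z by (simp add: eval_fps_def sums_iff)
    ultimately show "eval_fps (Abs_fps u) z = eval_fps ?S z" by simp
  qed auto
  ultimately have "Abs_fps u = ?S" by (rule eval_fps_eqD)
  then show ?thesis by (metis fps_nth_Abs_fps)
qed

lemma fps_sinh_hyp_nth:
  "(fps_sinh p * hyp_fps a b c) $ n
     = (\<Sum>i\<le>n. (if even i then 0 else p ^ i / fact i) * hyp_coeff a b c (n - i))"
  by (simp add: fps_mult_nth atLeast0AtMost fps_sinh_def hyp_fps_def)

lemma fps_sinh_hyp_recurrence:
  fixes a b c p :: complex
  assumes c: "\<forall>k::nat. c \<noteq> - of_nat k" and "c \<noteq> 2" and "n \<ge> 9"
  defines "s \<equiv> fps_nth (fps_sinh p * hyp_fps a b c)"
  shows "s (n + 1) = (\<Sum>i\<le>9. delta a b c p i (of_nat n) * s (n - i))"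
proof -
  let ?G = "\<lambda>q. fps_nth (fps_exp q * hyp_fps a b c)"
  have D: "Dfun c (of_nat n) \<noteq> 0" using assms by (intro Dfun_neq_0) auto
  have G: "?G q (n + 1) = (\<Sum>i\<le>9. delta a b c q i (of_nat n) * ?G q (n - i))" for q
    by (rule delta_recurrence[OF exp_hyp_residual_eq_0[OF c] D \<open>n \<ge> 9\<close>])
  have s: "s k = (?G p k - ?G (- p) k) / 2" for k
    by (simp add: s_def fps_sinh_conv_exp mult.assoc left_diff_distrib)
  show ?thesis
    unfolding s G[of p] G[of "- p"] delta_minus
    by (simp add: diff_divide_distrib sum_divide_distrib right_diff_distrib sum_subtractf)
qed

theorem theorem3p10:
  fixes a b c p :: complex and u :: "nat \<Rightarrow> complex"
  assumes hc: "\<forall>k::nat. c \<noteq> - of_nat k"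
    and hc2: "c \<noteq> 2"
    and hu: "\<forall>z::complex. norm z < 1 \<longrightarrow>
               (\<lambda>n. u n * z ^ n) sums (sinh (p * z) * hyp2F1 a b c z)"
  shows "(u 0 = 0) \<and>
    (u 1 = p) \<and>
    (u 2 = a*b*p / c) \<and>
    (u 3 = pochhammer a 2 * pochhammer b 2 * p / (2 * pochhammer c 2) + p^3 / 6) \<and>
    (u 4 = a*b*p^3 / (6*c) + pochhammer a 3 * pochhammer b 3 * p / (6 * pochhammer c 3)) \<and>
    (u 5 = pochhammer a 2 * pochhammer b 2 * p^3 / (12 * pochhammer c 2)
             + pochhammer a 4 * pochhammer b 4 * p / (24 * pochhammer c 4) + p^5 / 120) \<and>
    (u 6 = a*b*p^5 / (120*c)
             + pochhammer a 3 * pochhammer b 3 * p^3 / (36 * pochhammer c 3)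
             + pochhammer a 5 * pochhammer b 5 * p / (120 * pochhammer c 5)) \<and>
    (u 7 = pochhammer a 2 * pochhammer b 2 * p^5 / (240 * pochhammer c 2)
             + pochhammer a 4 * pochhammer b 4 * p^3 / (144 * pochhammer c 4)
             + pochhammer a 6 * pochhammer b 6 * p / (720 * pochhammer c 6) + p^7 / 5040) \<and>
    (u 8 = a*b*p^7 / (5040*c)
             + pochhammer a 3 * pochhammer b 3 * p^5 / (720 * pochhammer c 3)
             + pochhammer a 5 * pochhammer b 5 * p^3 / (720 * pochhammer c 5)
             + pochhammer a 7 * pochhammer b 7 * p / (5040 * pochhammer c 7)) \<and>
    (u 9 = pochhammer a 2 * pochhammer b 2 * p^7 / (10080 * pochhammer c 2)
             + pochhammer a 4 * pochhammer b 4 * p^5 / (2880 * pochhammer c 4)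
             + pochhammer a 6 * pochhammer b 6 * p^3 / (4320 * pochhammer c 6)
             + pochhammer a 8 * pochhammer b 8 * p / (40320 * pochhammer c 8) + p^9 / 362880) \<and>
    (\<forall>n\<ge>9. u (n+1) = (\<Sum>i\<le>9. delta a b c p i (of_nat n) * u (n - i)))"
proof -
  have u: "u n = (\<Sum>i\<le>n. (if even i then 0 else p ^ i / fact i) * hyp_coeff a b c (n - i))" for n
    unfolding coeffs_of_sums_sinh_hyp2F1[OF hu] by (rule fps_sinh_hyp_nth)
  show ?thesis
  proof (intro conjI)
    show "\<forall>n\<ge>9. u (n + 1) = (\<Sum>i\<le>9. delta a b c p i (of_nat n) * u (n - i))"
      using fps_sinh_hyp_recurrence[OF hc hc2] by (simp add: coeffs_of_sums_sinh_hyp2F1[OF hu])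
  qed (simp_all add: u atMost_nat_numeral hyp_coeff_def fact_numeral mult_ac)
qed

end
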